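(* Let $(X,\alpha,T)$ be a dynamical system, $T$ a semigroup with identity acting on a compact metrizable space $X$ by continuous surjections, and let $T=T_1\cup\cdots\cup T_k$ be a decomposition into finitely many subsemigroups. If each $E(X,T_i)$ is completely regular, then $E(X,T)$ is completely regular.
   Context: $E(X,S)$ for $S\subset T$ denotes the closure of $\{\alpha^t:t\in S\}$ in $X^X$ with the topology of pointwise convergence; these are semigroups under composition. A semigroup is completely regular if each element $a$ admits $x$ with $a=axa$, $ax=xa$. *)

theory Defs
  imports "HOL-Analysis.Analysis"
begin

text \<open>Enveloping semigroup E(X,S): closure of the maps alpha t (t in S) in X^X,
  where the function space carries the product topology (= pointwise convergence),
  which is the topology instance on type fun from Function_Topology.\<close>
definition enveloping :: "('t \<Rightarrow> 'x \<Rightarrow> 'x::topological_space) \<Rightarrow> 't set \<Rightarrow> ('x \<Rightarrow> 'x) set" where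
  "enveloping \<alpha> S = closure (\<alpha> ` S)"

definition completely_regular :: "('x \<Rightarrow> 'x) set \<Rightarrow> bool" where
  "completely_regular E \<longleftrightarrow> (\<forall>a\<in>E. \<exists>x\<in>E. a = a \<circ> x \<circ> a \<and> a \<circ> x = x \<circ> a)"

definition subsemigroup :: "'t::semigroup_mult set \<Rightarrow> bool" where
  "subsemigroup S \<longleftrightarrow> (\<forall>a\<in>S. \<forall>b\<in>S. a * b \<in> S)"

end

theory Submission
  imports Defs
begin

text \<open>Closure commutes with finite unions, so \<open>E(X,T)\<close> is the union of the \<open>E(X,T\<^sub>i)\<close>;
  and complete regularity of an element is witnessed inside any one of these pieces, hence
  inside the union.\<close>

lemma closure_UN_finite:
  assumes "finite I"
  shows "closure (\<Union>i\<in>I. A i) = (\<Union>i\<in>I. closure (A i))"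
  using assms by (induction I rule: finite_induct) auto

lemma enveloping_UN_finite:
  assumes "finite I"
  shows "enveloping \<alpha> (\<Union>i\<in>I. T i) = (\<Union>i\<in>I. enveloping \<alpha> (T i))"
  using closure_UN_finite [OF assms] by (simp add: enveloping_def image_UN)

lemma completely_regular_UN:
  assumes "\<And>i. i \<in> I \<Longrightarrow> completely_regular (E i)"
  shows "completely_regular (\<Union>i\<in>I. E i)"
  unfolding completely_regular_def
proof
  fix a assume "a \<in> (\<Union>i\<in>I. E i)"
  then obtain i where i: "i \<in> I" "a \<in> E i" by blast
  then obtain x where "x \<in> E i" "a = a \<circ> x \<circ> a \<and> a \<circ> x = x \<circ> a"
    using assms unfolding completely_regular_def by blast
  with i show "\<exists>x\<in>(\<Union>i\<in>I. E i). a = a \<circ> x \<circ> a \<and> a \<circ> x = x \<circ> a" by blast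
qed

theorem corollary3p3:
  fixes \<alpha> :: "'t::monoid_mult \<Rightarrow> 'x::metric_space \<Rightarrow> 'x"
    and Ts :: "nat \<Rightarrow> 't set" and k :: nat
  assumes "compact (UNIV :: 'x set)"
    and "\<alpha> 1 = id"
    and "\<And>s t. \<alpha> (s * t) = \<alpha> s \<circ> \<alpha> t"
    and "\<And>t. continuous_on UNIV (\<alpha> t)"
    and "\<And>t. surj (\<alpha> t)"
    and "\<And>i. i < k \<Longrightarrow> subsemigroup (Ts i)"
    and cover: "(\<Union>i<k. Ts i) = UNIV"
    and regular: "\<And>i. i < k \<Longrightarrow> completely_regular (enveloping \<alpha> (Ts i))"
  shows "completely_regular (enveloping \<alpha> UNIV)"
proof -
  have "enveloping \<alpha> UNIV = (\<Union>i<k. enveloping \<alpha> (Ts i))"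
    using enveloping_UN_finite [of "{..<k}" \<alpha> Ts] by (simp add: cover)
  with regular show ?thesis
    using completely_regular_UN [of "{..<k}" "\<lambda>i. enveloping \<alpha> (Ts i)"] by simp
qed

end
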